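(* Fix FG declarations $\overline{D}$ and a TL method substitution $\sigma_m$. If $\overline{D}\approx_k\sigma_m$ and $k'\le k$, then $\overline{D}\approx_{k'}\sigma_m$.
   Context: Featherweight Go (FG). Field names $f$, method names $m$, variables $x$, structure type names $t_S,u_S$, interface type names $t_I,u_I$; types $t,u$ range over both kinds of names. A method signature is $M = (x_1\,t_1,\ldots,x_n\,t_n)\,t$; a method specification is $m M$. Expressions: $e ::= x \mid e.m(e_1,\ldots,e_n) \mid t_S\{e_1,\ldots,e_n\} \mid e.f \mid e.(t)$. Declarations: $\mathtt{type}\ t_S\ \mathtt{struct}\{f_1\,t_1 \ldots f_n\,t_n\}$, $\mathtt{type}\ t_I\ \mathtt{interface}\{S_1 \ldots S_q\}$ (in this order), and method declarations $\mathtt{func}\ (x\ t_S)\ m M\ \{\mathtt{return}\ e\}$, each uniquely identified by receiver type and method name. $\mathrm{methods}(\overline{D},t_S)=\{mM \mid \mathtt{func}\ (x\ t_S)\ mM\{\ldots\}\in\overline{D}\}$; $\mathrm{methods}(\overline{D},t_I)$ is the set of specifications of $t_I$. Subtyping: $t_S<:t_S$, and $t<:u_I$ iff $\mathrm{methods}(\overline{D},t)\supseteq\mathrm{methods}(\overline{D},u_I)$. $\mathrm{methodLookup}(\overline{D},(m,t_S))$ is the unique declaration $\mathtt{func}\ (x\ t_S)\ mM\{\ldots\}\in\overline{D}$. FG values $v ::= t_S\{v_1,\ldots,v_n\}$; reduction $\overline{D}\vdash d\longrightarrow e$ is closed under evaluation contexts $\mathcal{E} ::= [\,] \mid t_S\{\overline{v},\mathcal{E},\overline{e}\}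 \mid \mathcal{E}.f \mid \mathcal{E}.(t) \mid \mathcal{E}.m(\overline{e}) \mid v.m(\overline{v},\mathcal{E},\overline{e})$ with rules $t_S\{v_1..v_n\}.f_i\longrightarrow v_i$; $v.m(v_1..v_n)\longrightarrow[x\mapsto v,x_i\mapsto v_i]e$ if $v=t_S\{\ldots\}$ and $\mathtt{func}\ (x\ t_S)\ m(x_1t_1..x_nt_n)t\{\mathtt{return}\ e\}\in\overline{D}$; $v.(t)\longrightarrow v$ if $v=t_S\{\ldots\}$ and $t_S<:t$. $\overline{D}\vdash e\longrightarrow^{\le k}v$: reduction to value $v$ in at most $k$ steps. Target language (TL): $E ::= X\mid K\mid E\,E\mid\lambda X.E\mid\mathtt{case}\ E\ \mathtt{of}\ [Pat_1\to E_1,\ldots]$, $Pat ::= K\,X_1..X_n$, tuples $(E_1,..,E_n)$. TL values $V ::= X\mid K\,V_1..V_n$. With method substitution $\sigma_m$ (variables to $\lambda$-abstractions), $\sigma_m\vdash E\longrightarrow E'$ is closed under contexts $R ::= [\,]\mid K\,\overline{V}\,R\,\overline{E}\mid\mathtt{case}\ R\ \mathtt{of}\ [\ldots]\mid R\,E\mid V\,R$ with rules $(\lambda X.E)V\longrightarrow[X\mapsto V]E$; $\mathtt{case}\ K\,V_1..V_n\ \mathtt{of}\ [\ldots]\longrightarrow[X_i\mapsto V_i]E'$ for clause $K\,X_1..X_n\to E'$; $Y\,E\longrightarrow\sigma_m(Y)\,E$. $\sigma_m\vdash E\longrightarrow^{\le k}V$ analogously. Constructors $K_{t_S}$, $K_{t_I}$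 for structs and interfaces; the method declaration of $m$ for receiver $t_S$ has a TL variable $m_{t_S}$. Step-indexed logical relation (relative to $\overline{D}$, $\sigma_m$): (Exp) $\models_k t:e\approx E$ holds if for all $k_1<k$, $k_2<k$, $v$, $V$ with $k-k_1-k_2>0$, $\overline{D}\vdash e\longrightarrow^{\le k_1}v$ and $\sigma_m\vdash E\longrightarrow^{\le k_2}V$, we have $\models_{k-k_1-k_2}t:v\approx V$. (Struct) $\models_k t_S:t_S\{v_1..v_n\}\approx K_{t_S}(V_1,..,V_n)$ if $\mathtt{type}\ t_S\ \mathtt{struct}\{f_1t_1..f_nt_n\}\in\overline{D}$ and $\models_k t_i:v_i\approx V_i$ for all $i$. (Iface) $\models_k t_I:v\approx K_{t_I}(V,V_1,..,V_n)$ if $V=K_{u_S}\overline{V'}$ for a struct $u_S$, $\models_{k_1}u_S:v\approx V$ for all $k_1<k$, $\mathrm{methods}(\overline{D},t_I)=\{m_1M_1,..,m_nM_n\}$ (declaration order), and $\models_{k_2}m_iM_i:\mathrm{methodLookup}(\overline{D},(m_i,u_S))\approx V_i$ for all $k_2<k$, $i$. (Method) $\models_k m(x_1t_1..x_nt_n)t:\mathtt{func}\ (x\ t_S)\ m(x_1t_1..x_nt_n)t\{\mathtt{return}\ e\}\approx V$ holds iff for all $k'\le k$ and $v',V',v_i,V_i$ with $\models_{k'}t_S:v'\approx V'$ and $\models_{k'}t_i:v_i\approx V_i$ for all $i$, we have $\models_{k'}t:[x\mapsto v',x_i\mapsto v_i]e\approx(V\,V')(V_1,..,V_n)$. (Decls)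 $\overline{D}\approx_k\sigma_m$ iff for every $\mathtt{func}\ (x\ t_S)\ mM\{\mathtt{return}\ e\}\in\overline{D}$, $\models_k mM:\mathtt{func}\ (x\ t_S)\ mM\{\mathtt{return}\ e\}\approx m_{t_S}$ (the TL variable). *)

theory Defs
  imports Main
begin

type_synonym fname = string
type_synonym mname = string
type_synonym vname = string
type_synonym tname = string

datatype ty = TStruct tname | TIface tname

datatype fgexp =
    Var vname
  | Call fgexp mname "fgexp list"
  | SLit tname "fgexp list"
  | Sel fgexp fname
  | Assert fgexp ty

text \<open>Method signature (x1 t1, ..., xn tn) t.\<close>
datatype msig = Sig "(vname \<times> ty) list" ty

type_synonym mspec = "mname \<times> msig"

datatype decl =
    DStruct tname "(fname \<times> ty) list"
  | DIface tname "mspec list"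
  | DMeth vname tname mname msig fgexp  \<comment> \<open>func (x tS) m M {return e}\<close>

definition methods :: "decl list \<Rightarrow> ty \<Rightarrow> mspec set" where
  "methods D t = (case t of
      TStruct tS \<Rightarrow> {(m, M). \<exists>x e. DMeth x tS m M e \<in> set D}
    | TIface tI \<Rightarrow> {S. \<exists>Ss. DIface tI Ss \<in> set D \<and> S \<in> set Ss})"

definition subtype :: "decl list \<Rightarrow> ty \<Rightarrow> ty \<Rightarrow> bool" where
  "subtype D t u = (case u of
      TStruct uS \<Rightarrow> t = TStruct uS
    | TIface uI \<Rightarrow> methods D t \<supseteq> methods D (TIface uI))"

definition methodLookup :: "decl list \<Rightarrow> mname \<Rightarrow> tname \<Rightarrow> decl" where
  "methodLookup D m tS = (THE d. d \<in> set D \<and> (\<exists>x M e. d = DMeth x tS m M e))"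

fun fg_val :: "fgexp \<Rightarrow> bool" where
  "fg_val (SLit t vs) = (\<forall>v\<in>set vs. fg_val v)"
| "fg_val _ = False"

fun fg_subst :: "(vname \<Rightarrow> fgexp option) \<Rightarrow> fgexp \<Rightarrow> fgexp" where
  "fg_subst s (Var x) = (case s x of Some e \<Rightarrow> e | None \<Rightarrow> Var x)"
| "fg_subst s (Call e m es) = Call (fg_subst s e) m (map (fg_subst s) es)"
| "fg_subst s (SLit t es) = SLit t (map (fg_subst s) es)"
| "fg_subst s (Sel e f) = Sel (fg_subst s e) f"
| "fg_subst s (Assert e t) = Assert (fg_subst s e) t"

inductive fg_step :: "decl list \<Rightarrow> fgexp \<Rightarrow> fgexp \<Rightarrow> bool" for D where
  field: "\<lbrakk> fg_val (SLit tS vs); DStruct tS fs \<in> set D; length fs = length vs;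
           i < length vs; fst (fs ! i) = f \<rbrakk>
          \<Longrightarrow> fg_step D (Sel (SLit tS vs) f) (vs ! i)"
| call: "\<lbrakk> v = SLit tS ws; fg_val v; \<forall>a\<in>set vs. fg_val a;
          DMeth x tS m (Sig ps t) e \<in> set D; length ps = length vs \<rbrakk>
          \<Longrightarrow> fg_step D (Call v m vs)
                 (fg_subst (map_of (zip (x # map fst ps) (v # vs))) e)"
| assert: "\<lbrakk> v = SLit tS ws; fg_val v; subtype D (TStruct tS) t \<rbrakk>
          \<Longrightarrow> fg_step D (Assert v t) v"
| ctx_lit: "\<lbrakk> \<forall>a\<in>set vs. fg_val a; fg_step D e e' \<rbrakk>
          \<Longrightarrow> fg_step D (SLit tS (vs @ e # es)) (SLit tS (vs @ e' # es))"
| ctx_sel: "fg_step D e e' \<Longrightarrow> fg_step D (Sel e f) (Sel e' f)"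
| ctx_assert: "fg_step D e e' \<Longrightarrow> fg_step D (Assert e t) (Assert e' t)"
| ctx_recv: "fg_step D e e' \<Longrightarrow> fg_step D (Call e m es) (Call e' m es)"
| ctx_arg: "\<lbrakk> fg_val v; \<forall>a\<in>set vs. fg_val a; fg_step D e e' \<rbrakk>
          \<Longrightarrow> fg_step D (Call v m (vs @ e # es)) (Call v m (vs @ e' # es))"

definition fg_steps_le :: "decl list \<Rightarrow> nat \<Rightarrow> fgexp \<Rightarrow> fgexp \<Rightarrow> bool" where
  "fg_steps_le D k e v = (\<exists>j\<le>k. (fg_step D ^^ j) e v \<and> fg_val v)"

text \<open>TL variables; the method declaration of m for receiver tS has the TL variable
  MethVar m tS (written m_tS in the paper).\<close>
datatype tlvar = TV string | MethVar mname tname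

datatype con = KS tname | KI tname | KTup nat

datatype tlexp =
    TVar tlvar
  | TCon con "tlexp list"
  | TApp tlexp tlexp
  | TLam tlvar tlexp
  | TCase tlexp "(con \<times> tlvar list \<times> tlexp) list"

definition tup :: "tlexp list \<Rightarrow> tlexp" where
  "tup Es = TCon (KTup (length Es)) Es"

fun tl_val :: "tlexp \<Rightarrow> bool" where
  "tl_val (TVar X) = True"
| "tl_val (TCon K Vs) = (\<forall>V\<in>set Vs. tl_val V)"
| "tl_val _ = False"

fun tl_subst :: "(tlvar \<Rightarrow> tlexp option) \<Rightarrow> tlexp \<Rightarrow> tlexp" where
  "tl_subst s (TVar X) = (case s X of Some E \<Rightarrow> E | None \<Rightarrow> TVar X)"
| "tl_subst s (TCon K Es) = TCon K (map (tl_subst s) Es)"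
| "tl_subst s (TApp E1 E2) = TApp (tl_subst s E1) (tl_subst s E2)"
| "tl_subst s (TLam X E) = TLam X (tl_subst (s(X := None)) E)"
| "tl_subst s (TCase E cls) =
     TCase (tl_subst s E) (map (\<lambda>(K, Xs, B). (K, Xs, tl_subst (s |` (- set Xs)) B)) cls)"

type_synonym msubst = "tlvar \<Rightarrow> tlexp option"

inductive tl_step :: "msubst \<Rightarrow> tlexp \<Rightarrow> tlexp \<Rightarrow> bool" for \<sigma> where
  beta: "tl_val V \<Longrightarrow> tl_step \<sigma> (TApp (TLam X E) V) (tl_subst [X \<mapsto> V] E)"
| case_red: "\<lbrakk> \<forall>V\<in>set Vs. tl_val V; (K, Xs, E') \<in> set cls; length Xs = length Vs \<rbrakk>
          \<Longrightarrow> tl_step \<sigma> (TCase (TCon K Vs) cls) (tl_subst (map_of (zip Xs Vs)) E')"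
| meth: "\<sigma> Y = Some L \<Longrightarrow> tl_step \<sigma> (TApp (TVar Y) E) (TApp L E)"
| ctx_con: "\<lbrakk> \<forall>V\<in>set Vs. tl_val V; tl_step \<sigma> E E' \<rbrakk>
          \<Longrightarrow> tl_step \<sigma> (TCon K (Vs @ E # Es)) (TCon K (Vs @ E' # Es))"
| ctx_case: "tl_step \<sigma> E E' \<Longrightarrow> tl_step \<sigma> (TCase E cls) (TCase E' cls)"
| ctx_app1: "tl_step \<sigma> E E' \<Longrightarrow> tl_step \<sigma> (TApp E E2) (TApp E' E2)"
| ctx_app2: "\<lbrakk> tl_val V; tl_step \<sigma> E E' \<rbrakk> \<Longrightarrow> tl_step \<sigma> (TApp V E) (TApp V E')"

definition tl_steps_le :: "msubst \<Rightarrow> nat \<Rightarrow> tlexp \<Rightarrow> tlexp \<Rightarrow> bool" where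
  "tl_steps_le \<sigma> k E V = (\<exists>j\<le>k. (tl_step \<sigma> ^^ j) E V \<and> tl_val V)"

type_synonym vrelT = "nat \<Rightarrow> ty \<Rightarrow> fgexp \<Rightarrow> tlexp \<Rightarrow> bool"

definition erel_gen :: "decl list \<Rightarrow> msubst \<Rightarrow> vrelT \<Rightarrow> nat \<Rightarrow> ty \<Rightarrow> fgexp \<Rightarrow> tlexp \<Rightarrow> bool" where
  "erel_gen D \<sigma> L k t e E =
     (\<forall>k1 k2 v V. k1 < k \<longrightarrow> k2 < k \<longrightarrow> k - k1 - k2 > 0 \<longrightarrow>
        fg_steps_le D k1 e v \<longrightarrow> tl_steps_le \<sigma> k2 E V \<longrightarrow> L (k - k1 - k2) t v V)"

fun mrel_gen :: "decl list \<Rightarrow> msubst \<Rightarrow> vrelT \<Rightarrow> nat \<Rightarrow> mspec \<Rightarrow> decl \<Rightarrow> tlexp \<Rightarrow> bool" where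
  "mrel_gen D \<sigma> L k (m, Sig ps t) (DMeth x tS m' M' e) V =
     (m' = m \<and> M' = Sig ps t \<and>
      (\<forall>k' v' V' vs Vs. k' \<le> k \<longrightarrow> length vs = length ps \<longrightarrow> length Vs = length ps \<longrightarrow>
          L k' (TStruct tS) v' V' \<longrightarrow>
          (\<forall>i < length ps. L k' (snd (ps ! i)) (vs ! i) (Vs ! i)) \<longrightarrow>
          erel_gen D \<sigma> L k' t (fg_subst (map_of (zip (x # map fst ps) (v' # vs))) e)
                               (TApp (TApp V V') (tup Vs))))"
| "mrel_gen D \<sigma> L k S d V = False"

function (sequential) vrel_at :: "decl list \<Rightarrow> msubst \<Rightarrow> vrelT \<Rightarrow> nat \<Rightarrow> ty \<Rightarrow> fgexp \<Rightarrow> tlexp \<Rightarrow> bool" where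
  "vrel_at D \<sigma> L k (TStruct tS) (SLit tS' vs) (TCon (KS tS'') Vs) =
     (tS' = tS \<and> tS'' = tS \<and> fg_val (SLit tS' vs) \<and> tl_val (TCon (KS tS'') Vs) \<and>
      (\<exists>fs. DStruct tS fs \<in> set D \<and> length fs = length vs \<and> length Vs = length vs \<and>
         (\<forall>i < length vs. vrel_at D \<sigma> L k (snd (fs ! i)) (vs ! i) (Vs ! i))))"
| "vrel_at D \<sigma> L k (TIface tI) v (TCon (KI tI') (V0 # Vs)) =
     (tI' = tI \<and> fg_val v \<and> tl_val (TCon (KI tI') (V0 # Vs)) \<and>
      (\<exists>uS Vs' specs. V0 = TCon (KS uS) Vs' \<and>
          (\<forall>k1 < k. L k1 (TStruct uS) v V0) \<and>
          DIface tI specs \<in> set D \<and> length Vs = length specs \<and>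
          (\<forall>k2 < k. \<forall>i < length specs.
              mrel_gen D \<sigma> L k2 (specs ! i) (methodLookup D (fst (specs ! i)) uS) (Vs ! i))))"
| "vrel_at D \<sigma> L k t v V = False"
  by pat_completeness auto

termination
  by (relation "measure (\<lambda>(D, \<sigma>, L, k, t, v, V). size v)")
     (auto simp: less_Suc_eq_le intro!: size_list_estimation' nth_mem)

text \<open>Value relation: built up index by index; at index k, vrel_at only consults
  the relations at indices j < k.\<close>
primrec vtab :: "decl list \<Rightarrow> msubst \<Rightarrow> nat \<Rightarrow> (ty \<Rightarrow> fgexp \<Rightarrow> tlexp \<Rightarrow> bool) list" where
  "vtab D \<sigma> 0 = [vrel_at D \<sigma> (\<lambda>_ _ _ _. False) 0]"
| "vtab D \<sigma> (Suc k) = vtab D \<sigma> k @ [vrel_at D \<sigma> (\<lambda>j. vtab D \<sigma> k ! j) (Suc k)]"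

definition vrel :: "decl list \<Rightarrow> msubst \<Rightarrow> nat \<Rightarrow> ty \<Rightarrow> fgexp \<Rightarrow> tlexp \<Rightarrow> bool" where
  "vrel D \<sigma> k = vtab D \<sigma> k ! k"

definition erel :: "decl list \<Rightarrow> msubst \<Rightarrow> nat \<Rightarrow> ty \<Rightarrow> fgexp \<Rightarrow> tlexp \<Rightarrow> bool" where
  "erel D \<sigma> k = erel_gen D \<sigma> (vrel D \<sigma>) k"

definition mrel :: "decl list \<Rightarrow> msubst \<Rightarrow> nat \<Rightarrow> mspec \<Rightarrow> decl \<Rightarrow> tlexp \<Rightarrow> bool" where
  "mrel D \<sigma> k = mrel_gen D \<sigma> (vrel D \<sigma>) k"

definition decls_rel :: "decl list \<Rightarrow> nat \<Rightarrow> msubst \<Rightarrow> bool" where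
  "decls_rel D k \<sigma> =
     (\<forall>x tS m M e. DMeth x tS m M e \<in> set D \<longrightarrow>
        mrel D \<sigma> k (m, M) (DMeth x tS m M e) (TVar (MethVar m tS)))"

end

theory Submission
  imports Defs
begin

lemma mrel_gen_mono:
  assumes "mrel_gen D \<sigma> L k S d V" and "k' \<le> k"
  shows "mrel_gen D \<sigma> L k' S d V"
  using assms
  by (cases "(D, \<sigma>, L, k, S, d, V)" rule: mrel_gen.cases) (auto intro: le_trans)

lemma mrel_mono:
  assumes "mrel D \<sigma> k S d V" and "k' \<le> k"
  shows "mrel D \<sigma> k' S d V"
  using assms mrel_gen_mono unfolding mrel_def by blast

theorem lemma7:
  fixes D :: "decl list" and \<sigma> :: msubst and k k' :: nat
  assumes "decls_rel D k \<sigma>" and "k' \<le> k"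
  shows "decls_rel D k' \<sigma>"
  using assms mrel_mono unfolding decls_rel_def by blast

end
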